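(* Consider a credit-attribution game in which every paper has exactly two authors, two distinct players $x,y$, and the reliability extension of the full obligation game with fixed $p_x,p_y\in[0,1]$, baseline reliabilities $p^*_l\in(0,1]$, cost slopes $L_l,R_l>0$ and budget $B\ge0$. In the pairwise attack problem one must choose a feasible fractional attack on $x$ that leaves the reliabilities of $y$ and of all coauthors of $y$ at their baseline values, minimizing $Sh[\overline{v_{FO}}](x)$. Then the following is an optimal pairwise attack: run the greedy procedure (sort by decreasing $C(x,l)/L_l$, decrease to $0$ in order while the budget allows, decrease the next one as much as the remaining budget allows, leave everything else at baseline) restricted to the players $l\in CA(x)\setminus(CA(y)\cup\{y\})$.
   Context: Credit-attribution game: authors $N$, papers $P_k$ with author sets $Auth_k$ and weights $w_k\in\mathbb{R}_+$; $CA(z)$ is the set of coauthors of $z$; $C(x,l)=\sum w_k$ over papers authored by both $x$ and $l$. $v_{FO}(S)=\sum\{w_k:Auth_k\subseteq S\}$. For $T\subseteq S$, $\Pi_{T,S}=\prod_{i\in T}p_i\prod_{i\in S\setminus T}(1-p_i)$; reliability extension $\overline v(S)=\sum_{T\subseteq S}v(T)\Pi_{T,S}$. Shapley value $Sh[v](x)=\frac1{n!}\sum_\pi[v(S^x_\pi\cup\{x\})-v(S^x_\pi)]$. Fractional attack on $x$: $p_x$ fixed; for $j\ne x$ choose $p_j\in[0,1]$ at cost $u_j(p_j)=L_j(p^*_j-p_j)$ if $p_j<p^*_j$, $R_j(p_j-p^*_j)$ otherwise; feasible if the total cost is at most $B$. *)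

theory Defs
  imports Complex_Main "HOL-Combinatorics.Multiset_Permutations"
begin

text \<open>Papers are indexed by a finite set K; Auth k is the author set of paper k,
  w k its weight.\<close>

definition v_FO :: "'k set \<Rightarrow> ('k \<Rightarrow> 'a set) \<Rightarrow> ('k \<Rightarrow> real) \<Rightarrow> 'a set \<Rightarrow> real" where
  "v_FO K Auth w S = (\<Sum>k\<in>{k\<in>K. Auth k \<subseteq> S}. w k)"

definition Pi_rel :: "('a \<Rightarrow> real) \<Rightarrow> 'a set \<Rightarrow> 'a set \<Rightarrow> real" where
  "Pi_rel p T S = (\<Prod>i\<in>T. p i) * (\<Prod>i\<in>S - T. 1 - p i)"

definition rel_ext :: "('a \<Rightarrow> real) \<Rightarrow> ('a set \<Rightarrow> real) \<Rightarrow> 'a set \<Rightarrow> real" where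
  "rel_ext p v S = (\<Sum>T\<in>Pow S. v T * Pi_rel p T S)"

definition pred_set :: "'a list \<Rightarrow> 'a \<Rightarrow> 'a set" where
  "pred_set ord x = set (takeWhile (\<lambda>z. z \<noteq> x) ord)"

definition shapley :: "'a set \<Rightarrow> ('a set \<Rightarrow> real) \<Rightarrow> 'a \<Rightarrow> real" where
  "shapley N v x = (1 / fact (card N)) *
     (\<Sum>ord\<in>permutations_of_set N. v (insert x (pred_set ord x)) - v (pred_set ord x))"

definition coauthors :: "'k set \<Rightarrow> ('k \<Rightarrow> 'a set) \<Rightarrow> 'a \<Rightarrow> 'a set" where
  "coauthors K Auth z = {l. \<exists>k\<in>K. z \<in> Auth k \<and> l \<in> Auth k \<and> l \<noteq> z}"

definition Cw :: "'k set \<Rightarrow> ('k \<Rightarrow> 'a set) \<Rightarrow> ('k \<Rightarrow> real) \<Rightarrow> 'a \<Rightarrow> 'a \<Rightarrow> real" where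
  "Cw K Auth w x l = (\<Sum>k\<in>{k\<in>K. x \<in> Auth k \<and> l \<in> Auth k}. w k)"

definition cost :: "('a \<Rightarrow> real) \<Rightarrow> ('a \<Rightarrow> real) \<Rightarrow> ('a \<Rightarrow> real) \<Rightarrow> 'a \<Rightarrow> real \<Rightarrow> real" where
  "cost L R pstar j q = (if q < pstar j then L j * (pstar j - q) else R j * (q - pstar j))"

definition feasible_attack ::
  "'a set \<Rightarrow> ('a \<Rightarrow> real) \<Rightarrow> ('a \<Rightarrow> real) \<Rightarrow> ('a \<Rightarrow> real) \<Rightarrow> real \<Rightarrow> 'a \<Rightarrow> real \<Rightarrow> ('a \<Rightarrow> real) \<Rightarrow> bool" where
  "feasible_attack N L R pstar B x px p \<longleftrightarrow>
     p x = px \<and> (\<forall>j\<in>N - {x}. 0 \<le> p j \<and> p j \<le> 1) \<and>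
     (\<Sum>j\<in>N - {x}. cost L R pstar j (p j)) \<le> B"

text \<open>Pairwise attack: additionally y and all coauthors of y (other than x, whose
  reliability is fixed anyway) keep their baseline reliabilities.\<close>
definition pairwise_attack ::
  "'k set \<Rightarrow> ('k \<Rightarrow> 'a set) \<Rightarrow> 'a set \<Rightarrow> ('a \<Rightarrow> real) \<Rightarrow> ('a \<Rightarrow> real) \<Rightarrow> ('a \<Rightarrow> real) \<Rightarrow> real
    \<Rightarrow> 'a \<Rightarrow> real \<Rightarrow> 'a \<Rightarrow> ('a \<Rightarrow> real) \<Rightarrow> bool" where
  "pairwise_attack K Auth N L R pstar B x px y p \<longleftrightarrow>
     feasible_attack N L R pstar B x px p \<and> p y = pstar y \<and>
     (\<forall>l\<in>coauthors K Auth y - {x}. p l = pstar l)"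

fun greedy :: "('a \<Rightarrow> real) \<Rightarrow> ('a \<Rightarrow> real) \<Rightarrow> real \<Rightarrow> 'a list \<Rightarrow> ('a \<Rightarrow> real)" where
  "greedy L pstar b [] = pstar"
| "greedy L pstar b (l # ls) =
     (if L l * pstar l \<le> b then (greedy L pstar (b - L l * pstar l) ls)(l := 0)
      else pstar(l := pstar l - b / L l))"

end

theory Submission
  imports Defs
begin

text \<open>The reliability extension of the full obligation game is the combination, with weights
  w_k times the product of the reliabilities of the authors of paper k, of the unanimity games of
  the author sets. Since every author set is a pair, x gets half of each unanimity game it takes
  part in, so the Shapley value of x is p_x/2 times the sum of C(x,l) p_l over the coauthors l
  of x. Among these, a pairwise attack can move only the players of CA(x) - (CA(y) + y). Raising
  a reliability never helps, and lowering p_l by d costs L_l d and lowers the Shapley value by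
  p_x C(x,l) d / 2. Minimizing is thus a fractional knapsack problem, which is solved greedily by
  decreasing ratio C(x,l)/L_l.\<close>

section \<open>The greedy procedure solves the fractional knapsack problem\<close>

fun greedy_gain ::
  "('a \<Rightarrow> real) \<Rightarrow> ('a \<Rightarrow> real) \<Rightarrow> ('a \<Rightarrow> real) \<Rightarrow> real \<Rightarrow> 'a list \<Rightarrow> real"
where
  "greedy_gain c L pstar b [] = 0"
| "greedy_gain c L pstar b (l # ls) =
     (if L l * pstar l \<le> b then c l * pstar l + greedy_gain c L pstar (b - L l * pstar l) ls
      else c l * b / L l)"

lemma greedy_notin: "j \<notin> set ls \<Longrightarrow> greedy L pstar b ls j = pstar j"
  by (induction ls arbitrary: b) auto

lemma greedy_bounds:
  assumes "\<forall>j\<in>set ls. L j > 0 \<and> pstar j > 0" "b \<ge> 0" "j \<in> set ls"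
  shows "0 \<le> greedy L pstar b ls j \<and> greedy L pstar b ls j \<le> pstar j"
  using assms
proof (induction ls arbitrary: b)
  case (Cons l ls)
  show ?case
  proof (cases "L l * pstar l \<le> b")
    case False
    then have "b / L l \<le> pstar l" using Cons.prems
      by (simp add: divide_le_eq mult.commute)
    then show ?thesis using False Cons by (cases "j = l") auto
  qed (use Cons in \<open>cases "j = l"; auto\<close>)
qed simp

lemma greedy_spending_le:
  assumes "\<forall>j\<in>set ls. L j > 0 \<and> pstar j > 0" "b \<ge> 0" "distinct ls"
  shows "(\<Sum>j\<in>set ls. L j * (pstar j - greedy L pstar b ls j)) \<le> b"
  using assms
proof (induction ls arbitrary: b)
  case (Cons l ls)
  have tail: "(\<Sum>j\<in>set ls. L j * (pstar j - greedy L pstar b (l # ls) j)) =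
      (if L l * pstar l \<le> b then (\<Sum>j\<in>set ls. L j * (pstar j - greedy L pstar (b - L l * pstar l) ls j))
       else 0)"
    using Cons.prems by (cases "L l * pstar l \<le> b") (auto intro!: sum.cong sum.neutral)
  have "L l * pstar l \<le> b \<Longrightarrow>
      (\<Sum>j\<in>set ls. L j * (pstar j - greedy L pstar (b - L l * pstar l) ls j)) \<le> b - L l * pstar l"
    using Cons by auto
  with tail Cons.prems show ?case by (auto simp: divide_le_eq mult.commute)
qed simp

lemma greedy_gain_eq_sum:
  assumes "distinct ls"
  shows "(\<Sum>j\<in>set ls. c j * (pstar j - greedy L pstar b ls j)) = greedy_gain c L pstar b ls"
  using assms
proof (induction ls arbitrary: b)
  case (Cons l ls)
  have "(\<Sum>j\<in>set ls. c j * (pstar j - greedy L pstar b (l # ls) j)) =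
      (if L l * pstar l \<le> b then (\<Sum>j\<in>set ls. c j * (pstar j - greedy L pstar (b - L l * pstar l) ls j))
       else 0)"
    using Cons.prems by (cases "L l * pstar l \<le> b") (auto intro!: sum.cong sum.neutral)
  with Cons show ?case by auto
qed simp

lemma greedy_gain_zero_budget:
  assumes "\<forall>j\<in>set ls. L j > 0 \<and> pstar j > 0"
  shows "greedy_gain c L pstar 0 ls = 0"
  using assms by (cases ls) (auto simp: not_le dest: mult_pos_pos)

lemma greedy_gain_budget_lipschitz:
  assumes "\<forall>j\<in>set ls. L j > 0 \<and> pstar j > 0" "b \<ge> 0" "t \<ge> 0" "M \<ge> 0"
    and "\<forall>j\<in>set ls. c j / L j \<le> M"
  shows "greedy_gain c L pstar (b + t) ls \<le> greedy_gain c L pstar b ls + M * t"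
  using assms
proof (induction ls arbitrary: b t)
  case (Cons l ls)
  define a where "a = L l * pstar l"
  define r where "r = c l / L l"
  have Ll: "L l > 0" "pstar l > 0" and "r \<le> M" using Cons.prems unfolding r_def by auto
  consider "a \<le> b" | "b < a" "a \<le> b + t" | "b + t < a" by linarith
  then show ?case
  proof cases
    case 1
    then have "greedy_gain c L pstar (b - a + t) ls \<le> greedy_gain c L pstar (b - a) ls + M * t"
      using Cons by auto
    with 1 Cons.prems show ?thesis unfolding a_def by (simp add: algebra_simps)
  next
    case 2
    have "greedy_gain c L pstar (0 + (b + t - a)) ls \<le> greedy_gain c L pstar 0 ls + M * (b + t - a)"
      using Cons 2 by (intro Cons.IH) auto
    moreover have "greedy_gain c L pstar 0 ls = 0" using greedy_gain_zero_budget Cons.prems by auto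
    moreover have "c l * pstar l = r * a" "c l * b / L l = r * b"
      using Ll unfolding a_def r_def by simp_all
    moreover have "(M - r) * (b - a) \<le> 0"
      using \<open>r \<le> M\<close> 2 by (intro mult_nonneg_nonpos) auto
    ultimately show ?thesis using 2 by (simp add: a_def[symmetric] algebra_simps)
  next
    case 3
    have "c l * (b + t) / L l = c l * b / L l + r * t"
      unfolding r_def by (simp add: add_divide_distrib algebra_simps)
    moreover have "r * t \<le> M * t" using \<open>r \<le> M\<close> Cons.prems by (intro mult_right_mono) auto
    ultimately show ?thesis using 3 \<open>t \<ge> 0\<close> unfolding a_def by auto
  qed
qed simp

lemma greedy_gain_optimal:
  assumes "distinct ls" "sorted_wrt (\<lambda>a b. c a / L a \<ge> c b / L b) ls"
    and "\<forall>j\<in>set ls. L j > 0 \<and> pstar j > 0 \<and> c j \<ge> 0" "b \<ge> 0"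
    and "\<forall>j\<in>set ls. 0 \<le> d j \<and> d j \<le> pstar j" "(\<Sum>j\<in>set ls. L j * d j) \<le> b"
  shows "(\<Sum>j\<in>set ls. c j * d j) \<le> greedy_gain c L pstar b ls"
  using assms
proof (induction ls arbitrary: b)
  case (Cons l ls)
  define r where "r = c l / L l"
  have Ll: "L l > 0" "pstar l > 0" "d l \<ge> 0" "d l \<le> pstar l" using Cons.prems by auto
  have spent: "L l * d l + (\<Sum>j\<in>set ls. L j * d j) \<le> b" using Cons.prems by simp
  have ratio: "\<forall>j\<in>set ls. c j / L j \<le> r" using Cons.prems(2) unfolding r_def by simp
  show ?case
  proof (cases "L l * pstar l \<le> b")
    case True
    \<comment> \<open>What l leaves unspent of its full decrease is passed on to the tail.\<close>
    define b' where "b' = (b - L l * pstar l) + L l * (pstar l - d l)"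
    have "(\<Sum>j\<in>set ls. L j * d j) \<le> b'" using spent unfolding b'_def by (simp add: algebra_simps)
    then have "(\<Sum>j\<in>set ls. c j * d j) \<le> greedy_gain c L pstar b' ls"
      using Cons.IH[of b'] Cons.prems True Ll unfolding b'_def by auto
    also have "\<dots> \<le> greedy_gain c L pstar (b - L l * pstar l) ls + r * (L l * (pstar l - d l))"
      unfolding b'_def using Cons.prems True Ll ratio
      by (intro greedy_gain_budget_lipschitz) (auto simp: r_def)
    also have "r * (L l * (pstar l - d l)) = c l * (pstar l - d l)" using Ll unfolding r_def by simp
    finally show ?thesis using True Cons.prems by (simp add: algebra_simps)
  next
    case False
    have "(\<Sum>j\<in>set (l # ls). c j * d j) \<le> (\<Sum>j\<in>set (l # ls). r * (L j * d j))"
    proof (rule sum_mono)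
      fix j assume j: "j \<in> set (l # ls)"
      then have "(c j / L j) * (L j * d j) \<le> r * (L j * d j)"
        using ratio Cons.prems unfolding r_def by (intro mult_right_mono) auto
      then show "c j * d j \<le> r * (L j * d j)" using Cons.prems j by auto
    qed
    also have "\<dots> = r * (\<Sum>j\<in>set (l # ls). L j * d j)" by (simp add: sum_distrib_left)
    also have "\<dots> \<le> r * b"
      using Cons.prems Ll unfolding r_def by (intro mult_left_mono) auto
    finally show ?thesis using False unfolding r_def by simp
  qed
qed simp

section \<open>Reliability extension of the full obligation game\<close>

definition unanimity :: "'a set \<Rightarrow> 'a set \<Rightarrow> real" where
  "unanimity A S = (if A \<subseteq> S then 1 else 0)"

lemma v_FO_eq_sum_unanimity:
  assumes "finite K"
  shows "v_FO K Auth w = (\<lambda>S. \<Sum>k\<in>K. w k * unanimity (Auth k) S)"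
  unfolding v_FO_def unanimity_def using assms by (auto simp: sum.inter_filter intro!: sum.cong)

lemma rel_ext_linear:
  "rel_ext p (\<lambda>T. \<Sum>k\<in>K. c k * v k T) S = (\<Sum>k\<in>K. c k * rel_ext p (v k) S)"
  unfolding rel_ext_def sum_distrib_left sum_distrib_right by (subst sum.swap) (simp add: mult.assoc)

lemma rel_ext_unanimity:
  assumes "finite S"
  shows "rel_ext p (unanimity A) S = (\<Prod>i\<in>A. p i) * unanimity A S"
proof (cases "A \<subseteq> S")
  case True
  have fA: "finite A" using assms True finite_subset by blast
  \<comment> \<open>Write the supersets of A as A \<union> U; the factor left over for S - A is a product of
    terms p i + (1 - p i) = 1.\<close>
  have "rel_ext p (unanimity A) S = (\<Sum>T\<in>{T\<in>Pow S. A \<subseteq> T}. Pi_rel p T S)"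
    using assms by (subst sum.inter_filter) (auto simp: rel_ext_def unanimity_def intro!: sum.cong)
  also have "\<dots> = (\<Sum>U\<in>Pow (S - A). Pi_rel p (A \<union> U) S)"
    by (rule sum.reindex_bij_witness[where j="\<lambda>T. T - A" and i="\<lambda>U. A \<union> U"])
      (use True in \<open>auto simp: sup.absorb2\<close>)
  also have "\<dots> = (\<Sum>U\<in>Pow (S - A). (\<Prod>i\<in>A. p i) * Pi_rel p U (S - A))"
  proof (rule sum.cong)
    fix U assume U: "U \<in> Pow (S - A)"
    then have "finite U" using assms by (meson PowD finite_Diff finite_subset)
    then have "(\<Prod>i\<in>A \<union> U. p i) = (\<Prod>i\<in>A. p i) * (\<Prod>i\<in>U. p i)"
      using U fA by (intro prod.union_disjoint) auto
    moreover have "S - (A \<union> U) = (S - A) - U" by auto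
    ultimately show "Pi_rel p (A \<union> U) S = (\<Prod>i\<in>A. p i) * Pi_rel p U (S - A)"
      unfolding Pi_rel_def by simp
  qed simp
  also have "\<dots> = (\<Prod>i\<in>A. p i) * (\<Prod>i\<in>S - A. p i + (1 - p i))"
    using assms prod_add[of "S - A" p "\<lambda>i. 1 - p i"]
    by (simp add: Pi_rel_def sum_distrib_left[symmetric])
  finally show ?thesis using True by (simp add: unanimity_def)
next
  case False
  then have "\<not> A \<subseteq> T" if "T \<in> Pow S" for T using that by blast
  then show ?thesis using False unfolding rel_ext_def unanimity_def by (simp add: sum.neutral)
qed

lemma rel_ext_v_FO:
  assumes "finite S" "finite K"
  shows "rel_ext p (v_FO K Auth w) S = (\<Sum>k\<in>K. w k * (\<Prod>i\<in>Auth k. p i) * unanimity (Auth k) S)"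
  using assms by (simp add: v_FO_eq_sum_unanimity rel_ext_linear rel_ext_unanimity mult.assoc)

section \<open>Shapley values\<close>

lemma finite_pred_set [simp]: "finite (pred_set ord x)"
  unfolding pred_set_def by simp

lemma notin_pred_set_self [simp]: "x \<notin> pred_set ord x"
  unfolding pred_set_def by (auto dest: set_takeWhileD)

lemma mem_pred_set_iff:
  assumes "distinct ord" "x \<in> set ord" "l \<in> set ord" "x \<noteq> l"
  shows "l \<in> pred_set ord x \<longleftrightarrow> x \<notin> pred_set ord l"
  using assms
proof (induction ord)
  case (Cons a ord)
  consider "a = x" | "a = l" | "a \<noteq> x" "a \<noteq> l" by blast
  then show ?case
  proof cases
    case 3
    then have "l \<in> pred_set ord x \<longleftrightarrow> x \<notin> pred_set ord l" using Cons by simp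
    then show ?thesis using 3 unfolding pred_set_def by simp
  qed (use Cons.prems in \<open>simp_all add: pred_set_def\<close>)
qed simp

lemma pred_set_map:
  assumes "\<And>z. \<sigma> z = x \<longleftrightarrow> z = l"
  shows "pred_set (map \<sigma> ord) x = \<sigma> ` pred_set ord l"
proof -
  have "(\<lambda>z. z \<noteq> x) \<circ> \<sigma> = (\<lambda>z. z \<noteq> l)" using assms by (auto simp: fun_eq_iff)
  then show ?thesis unfolding pred_set_def by (simp add: takeWhile_map)
qed

lemma card_permutations_precede:
  assumes "finite N" "x \<in> N" "l \<in> N" "x \<noteq> l"
  shows "2 * card {ord \<in> permutations_of_set N. l \<in> pred_set ord x} = fact (card N)"
proof -
  let ?P = "permutations_of_set N"
  let ?A = "{ord \<in> ?P. l \<in> pred_set ord x}" and ?B = "{ord \<in> ?P. x \<in> pred_set ord l}"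
  define \<sigma> where "\<sigma> = transpose x l"
  have P_closed: "map \<sigma> ord \<in> ?P" if "ord \<in> ?P" for ord
    using that permutations_of_set_image_permutes[OF permutes_swap_id[OF assms(2,3)]]
    unfolding \<sigma>_def by blast
  have "pred_set (map \<sigma> ord) l = \<sigma> ` pred_set ord x" for ord
    by (rule pred_set_map) (auto simp: \<sigma>_def transpose_eq_iff)
  then have swap: "x \<in> pred_set (map \<sigma> ord) l \<longleftrightarrow> l \<in> pred_set ord x" for ord
    using inj_image_mem_iff[OF inj_transpose] unfolding \<sigma>_def by (metis transpose_apply_second)
  have involution: "map \<sigma> (map \<sigma> ord) = ord" for ord
    by (simp add: \<sigma>_def comp_def)
  have "bij_betw (map \<sigma>) ?A ?B"
    using P_closed swap swap[of "map \<sigma> _"] involution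
    by (intro bij_betw_byWitness[where f'="map \<sigma>"]) auto
  then have "card ?A = card ?B" by (rule bij_betw_same_card)
  moreover have "?A \<union> ?B = ?P" "?A \<inter> ?B = {}"
    using mem_pred_set_iff[of _ x l] assms by (auto dest: permutations_of_setD)
  then have "card ?A + card ?B = fact (card N)"
    using assms(1) card_Un_disjoint[of ?A ?B] by simp
  ultimately show ?thesis by simp
qed

lemma shapley_cong_finite:
  assumes "\<And>S. finite S \<Longrightarrow> v S = v' S"
  shows "shapley N v x = shapley N v' x"
  unfolding shapley_def using assms by simp

lemma shapley_linear:
  "shapley N (\<lambda>S. \<Sum>k\<in>K. c k * v k S) x = (\<Sum>k\<in>K. c k * shapley N (v k) x)"
  unfolding shapley_def sum_subtractf[symmetric] right_diff_distrib[symmetric] sum_distrib_left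
  by (subst sum.swap) (simp add: ac_simps)

lemma shapley_null_player:
  assumes "\<And>S. v (insert x S) = v S"
  shows "shapley N v x = 0"
  unfolding shapley_def using assms by simp

lemma shapley_unanimity_pair:
  assumes "finite N" "x \<in> N" "m \<in> N" "x \<noteq> m"
  shows "shapley N (unanimity {x, m}) x = 1 / 2"
proof -
  have "(\<Sum>ord\<in>permutations_of_set N.
          unanimity {x, m} (insert x (pred_set ord x)) - unanimity {x, m} (pred_set ord x))
      = (\<Sum>ord\<in>permutations_of_set N. if m \<in> pred_set ord x then 1 else 0)"
    using assms(4) by (intro sum.cong) (auto simp: unanimity_def)
  also have "\<dots> = card {ord \<in> permutations_of_set N. m \<in> pred_set ord x}"
    by (simp add: sum.If_cases Int_def)
  also have "\<dots> = fact (card N) / 2"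
  proof -
    have "2 * real (card {ord \<in> permutations_of_set N. m \<in> pred_set ord x}) = fact (card N)"
      using arg_cong[OF card_permutations_precede[OF assms], of real] by simp
    then show ?thesis by simp
  qed
  finally show ?thesis unfolding shapley_def by simp
qed

lemma card_2_containing:
  assumes "card A = 2" "x \<in> A"
  obtains m where "A = {x, m}" "m \<noteq> x"
  using assms by (auto simp: card_2_iff)

lemma shapley_rel_ext_v_FO_pairs:
  assumes "finite N" "finite K" "x \<in> N"
    and "\<And>k. k \<in> K \<Longrightarrow> Auth k \<subseteq> N \<and> card (Auth k) = 2"
  shows "shapley N (rel_ext p (v_FO K Auth w)) x =
           (\<Sum>k\<in>K. if x \<in> Auth k then w k * (\<Prod>i\<in>Auth k. p i) else 0) / 2"
proof -
  have "shapley N (rel_ext p (v_FO K Auth w)) x =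
      shapley N (\<lambda>S. \<Sum>k\<in>K. (w k * (\<Prod>i\<in>Auth k. p i)) * unanimity (Auth k) S) x"
    using assms(2) by (intro shapley_cong_finite) (simp add: rel_ext_v_FO)
  also have "\<dots> = (\<Sum>k\<in>K. w k * (\<Prod>i\<in>Auth k. p i) * shapley N (unanimity (Auth k)) x)"
    by (rule shapley_linear)
  also have "\<dots> = (\<Sum>k\<in>K. (if x \<in> Auth k then w k * (\<Prod>i\<in>Auth k. p i) else 0) / 2)"
  proof (rule sum.cong[OF refl])
    fix k assume k: "k \<in> K"
    show "w k * (\<Prod>i\<in>Auth k. p i) * shapley N (unanimity (Auth k)) x =
        (if x \<in> Auth k then w k * (\<Prod>i\<in>Auth k. p i) else 0) / 2"
    proof (cases "x \<in> Auth k")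
      case True
      with assms(4)[OF k] obtain m where "Auth k = {x, m}" "m \<noteq> x" "m \<in> N"
        by (metis card_2_containing insert_subset)
      then show ?thesis using True assms(1,3) by (simp add: shapley_unanimity_pair)
    next
      case False
      then have "shapley N (unanimity (Auth k)) x = 0"
        by (intro shapley_null_player) (auto simp: unanimity_def subset_insert)
      then show ?thesis using False by simp
    qed
  qed
  finally show ?thesis by (simp add: sum_divide_distrib)
qed

lemma sum_papers_eq_sum_coauthors:
  assumes "finite K" "\<And>k. k \<in> K \<Longrightarrow> card (Auth k) = 2"
  shows "(\<Sum>k\<in>K. if x \<in> Auth k then w k * (\<Prod>i\<in>Auth k. p i) else 0) =
           p x * (\<Sum>l\<in>coauthors K Auth x. Cw K Auth w x l * p l)"
proof -
  let ?CA = "coauthors K Auth x"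
  have "?CA \<subseteq> (\<Union>k\<in>K. Auth k)" unfolding coauthors_def by auto
  moreover have "finite (Auth k)" if "k \<in> K" for k using assms(2)[OF that] card_ge_0_finite by force
  ultimately have fin: "finite ?CA" using assms(1) by (meson finite_UN_I finite_subset)
  have "(\<Sum>l\<in>?CA. Cw K Auth w x l * p l) =
      (\<Sum>l\<in>?CA. \<Sum>k\<in>{k\<in>K. x \<in> Auth k \<and> l \<in> Auth k}. w k * p l)"
    unfolding Cw_def by (simp add: sum_distrib_right)
  also have "\<dots> = (\<Sum>k\<in>K. \<Sum>l\<in>{l\<in>?CA. x \<in> Auth k \<and> l \<in> Auth k}. w k * p l)"
    using fin assms(1) by (rule sum.swap_restrict)
  also have "p x * \<dots> = (\<Sum>k\<in>K. p x * (\<Sum>l\<in>{l\<in>?CA. x \<in> Auth k \<and> l \<in> Auth k}. w k * p l))"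
    by (rule sum_distrib_left)
  also have "\<dots> = (\<Sum>k\<in>K. if x \<in> Auth k then w k * (\<Prod>i\<in>Auth k. p i) else 0)"
  proof (rule sum.cong[OF refl])
    fix k assume k: "k \<in> K"
    show "p x * (\<Sum>l\<in>{l\<in>?CA. x \<in> Auth k \<and> l \<in> Auth k}. w k * p l) =
        (if x \<in> Auth k then w k * (\<Prod>i\<in>Auth k. p i) else 0)"
    proof (cases "x \<in> Auth k")
      case True
      with assms(2)[OF k] obtain m where m: "Auth k = {x, m}" "m \<noteq> x"
        by (rule card_2_containing)
      then have "{l\<in>?CA. x \<in> Auth k \<and> l \<in> Auth k} = {m}"
        using k unfolding coauthors_def by auto
      then show ?thesis using m True by simp
    qed simp
  qed
  finally show ?thesis by simp
qed

lemma shapley_rel_ext_v_FO: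
  assumes "finite N" "finite K" "x \<in> N"
    and "\<And>k. k \<in> K \<Longrightarrow> Auth k \<subseteq> N \<and> card (Auth k) = 2"
  shows "shapley N (rel_ext p (v_FO K Auth w)) x =
           p x / 2 * (\<Sum>l\<in>coauthors K Auth x. Cw K Auth w x l * p l)"
  using assms by (simp add: shapley_rel_ext_v_FO_pairs sum_papers_eq_sum_coauthors)

section \<open>Attacks\<close>

lemma cost_below_baseline:
  "q \<le> pstar j \<Longrightarrow> cost L R pstar j q = L j * (pstar j - q)"
  unfolding cost_def by auto

lemma cost_nonneg:
  "L j \<ge> 0 \<Longrightarrow> R j \<ge> 0 \<Longrightarrow> cost L R pstar j q \<ge> 0"
  unfolding cost_def by auto

lemma cost_ge_decrease:
  "R j \<ge> 0 \<Longrightarrow> L j * max 0 (pstar j - q) \<le> cost L R pstar j q"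
  unfolding cost_def by auto

lemma feasible_attack_decrease_cost_le_budget:
  assumes "feasible_attack N L R pstar B x px q" "finite N" "S \<subseteq> N - {x}"
    and "\<And>j. j \<in> N - {x} \<Longrightarrow> L j > 0 \<and> R j > 0"
  shows "(\<Sum>j\<in>S. L j * max 0 (pstar j - q j)) \<le> B"
proof -
  have "(\<Sum>j\<in>S. L j * max 0 (pstar j - q j)) \<le> (\<Sum>j\<in>S. cost L R pstar j (q j))"
    using assms(3,4) by (intro sum_mono cost_ge_decrease) (simp add: less_imp_le subset_iff)
  also have "\<dots> \<le> (\<Sum>j\<in>N - {x}. cost L R pstar j (q j))"
    using assms(2-4) by (intro sum_mono2 cost_nonneg) (auto simp: less_imp_le)
  also have "\<dots> \<le> B" using assms(1) unfolding feasible_attack_def by blast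
  finally show ?thesis .
qed

lemma greedy_feasible_attack:
  assumes "finite N" "distinct ls" "set ls \<subseteq> N - {x}" "B \<ge> 0"
    and "\<And>j. j \<in> N - {x} \<Longrightarrow> 0 < pstar j \<and> pstar j \<le> 1 \<and> L j > 0"
  shows "feasible_attack N L R pstar B x px ((greedy L pstar B ls)(x := px))"
proof -
  let ?g = "greedy L pstar B ls"
  have pos: "\<forall>j\<in>set ls. L j > 0 \<and> pstar j > 0" using assms(3,5) by auto
  have below: "0 \<le> ?g j \<and> ?g j \<le> pstar j" if "j \<in> N - {x}" for j
    using greedy_bounds[OF pos assms(4)] greedy_notin[of j ls] assms(5)[OF that]
    by (cases "j \<in> set ls") auto
  have "(\<Sum>j\<in>N - {x}. cost L R pstar j (?g j)) = (\<Sum>j\<in>N - {x}. L j * (pstar j - ?g j))"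
    using below by (intro sum.cong) (auto simp: cost_below_baseline)
  also have "\<dots> = (\<Sum>j\<in>set ls. L j * (pstar j - ?g j))"
    using assms(1,3) by (intro sum.mono_neutral_right) (auto simp: greedy_notin)
  also have "\<dots> \<le> B" using greedy_spending_le[OF pos assms(4,2)] .
  finally show ?thesis
    unfolding feasible_attack_def using below assms(5) by (auto intro: order.trans)
qed

lemma greedy_minimizes_weighted_sum:
  assumes "feasible_attack N L R pstar B x px q" "finite N"
    and "distinct ls" "set ls \<subseteq> N - {x}" "sorted_wrt (\<lambda>a b. c a / L a \<ge> c b / L b) ls"
    and "\<And>j. c j \<ge> 0" "B \<ge> 0"
    and "\<And>j. j \<in> N - {x} \<Longrightarrow> 0 < pstar j \<and> L j > 0 \<and> R j > 0"
  shows "(\<Sum>j\<in>set ls. c j * greedy L pstar B ls j) \<le> (\<Sum>j\<in>set ls. c j * q j)"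
proof -
  \<comment> \<open>Only the decrease d of q below the baseline matters: raising a reliability costs budget
    and can only increase the weighted sum.\<close>
  define d where "d j = max 0 (pstar j - q j)" for j
  have q01: "\<forall>j\<in>set ls. 0 \<le> q j" using assms(1,4) unfolding feasible_attack_def by auto
  have pos: "\<forall>j\<in>set ls. L j > 0 \<and> pstar j > 0 \<and> c j \<ge> 0" using assms(4,6,8) by auto
  have "(\<Sum>j\<in>set ls. L j * d j) \<le> B"
    unfolding d_def using assms(1,2,4,8) by (intro feasible_attack_decrease_cost_le_budget) auto
  then have "(\<Sum>j\<in>set ls. c j * d j) \<le> greedy_gain c L pstar B ls"
    using q01 pos unfolding d_def by (intro greedy_gain_optimal assms(3,5,7)) auto
  also have "\<dots> = (\<Sum>j\<in>set ls. c j * (pstar j - greedy L pstar B ls j))"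
    using greedy_gain_eq_sum[OF assms(3)] by simp
  finally have "(\<Sum>j\<in>set ls. c j * d j) \<le>
      (\<Sum>j\<in>set ls. c j * pstar j) - (\<Sum>j\<in>set ls. c j * greedy L pstar B ls j)"
    by (simp add: sum_subtractf right_diff_distrib)
  moreover have "(\<Sum>j\<in>set ls. c j * pstar j) - (\<Sum>j\<in>set ls. c j * d j) =
      (\<Sum>j\<in>set ls. c j * (pstar j - d j))"
    by (simp add: sum_subtractf right_diff_distrib)
  moreover have "\<dots> \<le> (\<Sum>j\<in>set ls. c j * q j)"
    using assms(6) unfolding d_def by (intro sum_mono mult_left_mono) auto
  ultimately show ?thesis by linarith
qed

lemma coauthors_subset:
  "(\<And>k. k \<in> K \<Longrightarrow> Auth k \<subseteq> N) \<Longrightarrow> coauthors K Auth x \<subseteq> N - {x}"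
  unfolding coauthors_def by auto

lemma Cw_nonneg: "(\<And>k. k \<in> K \<Longrightarrow> w k \<ge> 0) \<Longrightarrow> Cw K Auth w x l \<ge> 0"
  unfolding Cw_def by (intro sum_nonneg) auto

lemma greedy_pairwise_attack:
  assumes "finite N" "distinct ls" "set ls \<subseteq> N - {x}" "B \<ge> 0" "x \<noteq> y"
    and "set ls \<inter> (coauthors K Auth y \<union> {y}) = {}"
    and "\<And>j. j \<in> N - {x} \<Longrightarrow> 0 < pstar j \<and> pstar j \<le> 1 \<and> L j > 0"
  shows "pairwise_attack K Auth N L R pstar B x px y ((greedy L pstar B ls)(x := px))"
proof -
  have "greedy L pstar B ls l = pstar l" if "l \<in> coauthors K Auth y \<union> {y}" for l
    using assms(6) that by (intro greedy_notin) blast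
  moreover have "feasible_attack N L R pstar B x px ((greedy L pstar B ls)(x := px))"
    using assms(1-4,7) by (rule greedy_feasible_attack)
  ultimately show ?thesis using assms(5) unfolding pairwise_attack_def by auto
qed

lemma greedy_pairwise_optimal:
  assumes "pairwise_attack K Auth N L R pstar B x px y q" "finite N"
    and "distinct ls" "set ls = coauthors K Auth x - (coauthors K Auth y \<union> {y})"
    and "coauthors K Auth x \<subseteq> N - {x}"
    and "sorted_wrt (\<lambda>a b. c a / L a \<ge> c b / L b) ls" "\<And>j. c j \<ge> 0" "B \<ge> 0"
    and "\<And>j. j \<in> N - {x} \<Longrightarrow> 0 < pstar j \<and> L j > 0 \<and> R j > 0"
  shows "(\<Sum>l\<in>coauthors K Auth x. c l * ((greedy L pstar B ls)(x := px)) l)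
           \<le> (\<Sum>l\<in>coauthors K Auth x. c l * q l)"
proof -
  let ?CA = "coauthors K Auth x" and ?g = "greedy L pstar B ls"
  have fin: "finite ?CA" using assms(2,5) finite_subset by blast
  have ls: "set ls \<subseteq> ?CA" using assms(4) by blast
  have "(\<Sum>l\<in>set ls. c l * ?g l) \<le> (\<Sum>l\<in>set ls. c l * q l)"
    using assms(1) unfolding pairwise_attack_def
    by (intro greedy_minimizes_weighted_sum[where N=N and R=R and x=x and px=px] assms(2,3,6-9))
      (use assms(4,5) in auto)
  moreover have "q l = pstar l" if "l \<in> ?CA - set ls" for l
    using assms(1,4,5) that unfolding pairwise_attack_def by auto
  then have "(\<Sum>l\<in>?CA - set ls. c l * ?g l) = (\<Sum>l\<in>?CA - set ls. c l * q l)"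
    by (intro sum.cong) (auto simp: greedy_notin)
  ultimately have "(\<Sum>l\<in>?CA. c l * ?g l) \<le> (\<Sum>l\<in>?CA. c l * q l)"
    by (simp add: sum.subset_diff[OF ls fin])
  moreover have "(\<Sum>l\<in>?CA. c l * (?g(x := px)) l) = (\<Sum>l\<in>?CA. c l * ?g l)"
    using assms(5) by (intro sum.cong) auto
  ultimately show ?thesis by simp
qed

theorem corollary3:
  fixes K :: "'k set" and Auth :: "'k \<Rightarrow> 'a set" and w :: "'k \<Rightarrow> real"
    and N :: "'a set" and x y :: 'a and px :: real
    and pstar L R :: "'a \<Rightarrow> real" and B :: real and ls :: "'a list"
  assumes "finite N" and "finite K"
    and "\<And>k. k \<in> K \<Longrightarrow> Auth k \<subseteq> N \<and> card (Auth k) = 2"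
    and "\<And>k. k \<in> K \<Longrightarrow> w k \<ge> 0"
    and "x \<in> N" and "y \<in> N" and "x \<noteq> y"
    and "0 \<le> px" and "px \<le> 1"
    and "\<And>l. l \<in> N - {x} \<Longrightarrow> 0 < pstar l \<and> pstar l \<le> 1"
    and "\<And>l. l \<in> N - {x} \<Longrightarrow> L l > 0 \<and> R l > 0"
    and "B \<ge> 0"
    and "distinct ls"
    and "set ls = coauthors K Auth x - (coauthors K Auth y \<union> {y})"
    and "sorted_wrt (\<lambda>a b. Cw K Auth w x a / L a \<ge> Cw K Auth w x b / L b) ls"
  shows "pairwise_attack K Auth N L R pstar B x px y ((greedy L pstar B ls)(x := px)) \<and>
         (\<forall>q. pairwise_attack K Auth N L R pstar B x px y q \<longrightarrow>
            shapley N (rel_ext ((greedy L pstar B ls)(x := px)) (v_FO K Auth w)) x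
              \<le> shapley N (rel_ext q (v_FO K Auth w)) x)"
proof -
  let ?g = "(greedy L pstar B ls)(x := px)" and ?CA = "coauthors K Auth x"
  have CA: "?CA \<subseteq> N - {x}" using assms(3) by (intro coauthors_subset) blast
  have ls: "set ls \<subseteq> N - {x}" "set ls \<inter> (coauthors K Auth y \<union> {y}) = {}"
    using CA assms(14) by auto
  have "pairwise_attack K Auth N L R pstar B x px y ?g"
    by (intro greedy_pairwise_attack assms(1,13) ls assms(12,7)) (use assms(10,11) in auto)
  moreover have
    "shapley N (rel_ext ?g (v_FO K Auth w)) x \<le> shapley N (rel_ext q (v_FO K Auth w)) x"
    if q: "pairwise_attack K Auth N L R pstar B x px y q" for q
  proof -
    have shapley_eq: "shapley N (rel_ext p (v_FO K Auth w)) x =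
        p x / 2 * (\<Sum>l\<in>?CA. Cw K Auth w x l * p l)" for p by (rule shapley_rel_ext_v_FO) (use assms(1-3,5) in auto)
    have "(\<Sum>l\<in>?CA. Cw K Auth w x l * ?g l) \<le> (\<Sum>l\<in>?CA. Cw K Auth w x l * q l)"
      using Cw_nonneg[OF assms(4)] assms(10,11)
      by (intro greedy_pairwise_optimal[OF q assms(1,13,14) CA assms(15) _ assms(12)]) auto
    moreover have "q x = px" using q unfolding pairwise_attack_def feasible_attack_def by blast
    ultimately show ?thesis using assms(8) unfolding shapley_eq by (simp add: mult_left_mono)
  qed
  ultimately show ?thesis by blast
qed

end
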